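(* Let $k\geq 2$ and $p\geq 1$ be integers and let $\sigma$ be a multiset of $k+p$ real numbers. Then $\sigma$ is the spectrum of a matrix in $\mathcal{S}(L_{k,p})$ if and only if $\sigma$ contains at least $p+2$ distinct elements.
   Context: The $(k,p)$-lollipop graph $L_{k,p}$ is the graph on $k+p$ vertices obtained from the disjoint union of a complete graph $K_k$ and a path $P_p$ on $p$ vertices by adding an edge between a vertex of $K_k$ and a leaf (endpoint) of $P_p$. For a simple graph $G$ on $n$ vertices, $\mathcal{S}(G)$ is the set of all $n\times n$ real symmetric matrices $A=(a_{ij})$ such that for $i\neq j$, $a_{ij}\neq 0$ if and only if $\{i,j\}$ is an edge of $G$ (diagonal entries unrestricted). *)

theory Defs
  imports "Jordan_Normal_Form.Char_Poly" "HOL-Library.Multiset"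
begin

text \<open>The lollipop graph L_{k,p}: vertices 0..k-1 form the clique K_k, vertices k..k+p-1 form
  the path P_p (consecutive vertices adjacent), and the clique vertex k-1 is joined to the
  path leaf k.\<close>

definition lollipop_edge :: "nat \<Rightarrow> nat \<Rightarrow> nat \<Rightarrow> nat \<Rightarrow> bool" where
  "lollipop_edge k p i j \<longleftrightarrow> i < k + p \<and> j < k + p \<and> i \<noteq> j \<and>
     ((i < k \<and> j < k) \<or>
      (k \<le> i \<and> k \<le> j \<and> (j = i + 1 \<or> i = j + 1)) \<or>
      (i = k - 1 \<and> j = k) \<or> (i = k \<and> j = k - 1))"

definition sym_pattern :: "nat \<Rightarrow> (nat \<Rightarrow> nat \<Rightarrow> bool) \<Rightarrow> real mat set" where
  "sym_pattern n E = {A. A \<in> carrier_mat n n \<and> transpose_mat A = A \<and>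
     (\<forall>i<n. \<forall>j<n. i \<noteq> j \<longrightarrow> (A $$ (i, j) \<noteq> 0 \<longleftrightarrow> E i j))}"

definition is_spectrum :: "real multiset \<Rightarrow> real mat \<Rightarrow> bool" where
  "is_spectrum \<sigma> A \<longleftrightarrow> char_poly A = (\<Prod>a\<in>#\<sigma>. [:- a, 1:])"

end

theory Submission
  imports Defs "Jordan_Normal_Form.Schur_Decomposition"
begin

(*
  Necessity: the clique vertex 0 and the end k + p - 1 of the path are joined by a unique
  shortest path, of length p + 1. Hence for A in S(L_{k,p}) and any e_1, ..., e_{p+1} the
  (0, k + p - 1) entry of (A - e_1 I) ... (A - e_{p+1} I) is the product of the edge weights
  along that path, which is nonzero. On the other hand, for symmetric A the product of A - e I
  over the distinct eigenvalues e vanishes (Schur triangularization, and T^2 = 0 forces T = 0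
  for symmetric T), so there are at least p + 2 of them.

  Sufficiency: p + 2 distinct eigenvalues are the spectrum of an irreducible Jacobi matrix J,
  whose entries come from the three-term recurrence of the orthogonal polynomials of a
  discrete measure supported on them. Put the remaining k - 2 eigenvalues on the diagonal of a
  block D and conjugate D (+) J by the Householder reflection in w = (1, t, ..., t^(k-2), 0, ...).
  This only changes the entries in the first k - 1 rows and columns: it fills in the clique on
  the vertices 0, ..., k - 1 and leaves the path untouched, provided t avoids the roots of
  finitely many nonzero polynomials (which needs the weights of the measure chosen so that the
  first diagonal entry of J differs from the first entry of D).
*)

section \<open>Orthogonal polynomials of a discrete measure\<close>

definition discrete_inner :: "(nat \<Rightarrow> real) \<Rightarrow> real list \<Rightarrow> real poly \<Rightarrow> real poly \<Rightarrow> real" where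
  "discrete_inner w xs f g = (\<Sum>i<length xs. w i * poly f (xs ! i) * poly g (xs ! i))"

definition rayleigh_quot :: "(nat \<Rightarrow> real) \<Rightarrow> real list \<Rightarrow> real poly \<Rightarrow> real" where
  "rayleigh_quot w xs f = discrete_inner w xs ([:0, 1:] * f) f / discrete_inner w xs f f"

definition norm_ratio :: "(nat \<Rightarrow> real) \<Rightarrow> real list \<Rightarrow> real poly \<Rightarrow> real poly \<Rightarrow> real" where
  "norm_ratio w xs f g = discrete_inner w xs f f / discrete_inner w xs g g"

fun orth_poly :: "(nat \<Rightarrow> real) \<Rightarrow> real list \<Rightarrow> nat \<Rightarrow> real poly" where
  "orth_poly w xs 0 = 1"
| "orth_poly w xs (Suc 0) = [:- rayleigh_quot w xs 1, 1:]"
| "orth_poly w xs (Suc (Suc j)) =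
     [:- rayleigh_quot w xs (orth_poly w xs (Suc j)), 1:] * orth_poly w xs (Suc j)
     - Polynomial.smult (norm_ratio w xs (orth_poly w xs (Suc j)) (orth_poly w xs j)) (orth_poly w xs j)"

lemma discrete_inner_commute: "discrete_inner w xs f g = discrete_inner w xs g f"
  unfolding discrete_inner_def by (simp add: algebra_simps)

lemma discrete_inner_add_right:
  "discrete_inner w xs f (g + h) = discrete_inner w xs f g + discrete_inner w xs f h"
  unfolding discrete_inner_def by (simp add: algebra_simps sum.distrib)

lemma discrete_inner_smult_right:
  "discrete_inner w xs f (Polynomial.smult c g) = c * discrete_inner w xs f g"
  unfolding discrete_inner_def by (simp add: algebra_simps sum_distrib_left)

lemma discrete_inner_zero_right [simp]: "discrete_inner w xs f 0 = 0"
  unfolding discrete_inner_def by simp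

lemma discrete_inner_x_shift:
  "discrete_inner w xs ([:0, 1:] * f) g = discrete_inner w xs f ([:0, 1:] * g)"
  unfolding discrete_inner_def by (simp add: algebra_simps)

lemma discrete_inner_three_term:
  "discrete_inner w xs ([:- a, 1:] * f - Polynomial.smult b h) g
     = discrete_inner w xs f ([:0, 1:] * g) - a * discrete_inner w xs f g - b * discrete_inner w xs h g"
  unfolding discrete_inner_def
  by (simp add: algebra_simps sum_subtractf sum_distrib_left sum.distrib)

lemma orth_poly_monic: "degree (orth_poly w xs j) = j \<and> monic (orth_poly w xs j)"
proof (induction w xs j rule: orth_poly.induct)
  case (3 w xs j)
  let ?f = "orth_poly w xs (Suc j)" and ?h = "orth_poly w xs j"
  define g where "g = [:- rayleigh_quot w xs ?f, 1:] * ?f"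
  define b where "b = norm_ratio w xs ?f ?h"
  have "?f \<noteq> 0"
    using 3 by auto
  hence "degree g = Suc (Suc j)"
    using 3 unfolding g_def by (simp add: degree_monic_mult del: mult_pCons_left)
  moreover have "monic g"
    unfolding g_def by (rule monic_mult) (use 3 in simp_all)
  moreover have "degree (Polynomial.smult b ?h) < Suc (Suc j)"
    using 3 by simp
  moreover have "orth_poly w xs (Suc (Suc j)) = g - Polynomial.smult b ?h"
    by (simp add: g_def b_def)
  ultimately show ?case
    using 3 degree_add_eq_left[of "- Polynomial.smult b ?h" g] by (simp add: coeff_eq_0)
qed simp_all

lemma discrete_inner_orthogonal_extend:
  assumes orth: "\<forall>q. degree q < d \<longrightarrow> discrete_inner w xs f q = 0"
    and "discrete_inner w xs f P = 0" and "degree P = d" and "monic P"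
  shows "\<forall>q. degree q < Suc d \<longrightarrow> discrete_inner w xs f q = 0"
proof (intro allI impI)
  fix q :: "real poly" assume "degree q < Suc d"
  define r where "r = q - Polynomial.smult (coeff q d) P"
  have "r = 0 \<or> degree r < d"
    using \<open>degree q < Suc d\<close> assms(3,4)
    by (intro eq_zero_or_degree_less) (auto simp: r_def degree_diff_le)
  hence "discrete_inner w xs f r = 0"
    using orth by auto
  have "discrete_inner w xs f q = discrete_inner w xs f (Polynomial.smult (coeff q d) P + r)"
    by (simp add: r_def)
  also have "\<dots> = coeff q d * discrete_inner w xs f P + discrete_inner w xs f r"
    by (simp only: discrete_inner_add_right discrete_inner_smult_right)
  finally show "discrete_inner w xs f q = 0"
    using assms(2) \<open>discrete_inner w xs f r = 0\<close> by simp
qed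

lemma orth_poly_Suc_Suc_orthogonal:
  assumes orth_f: "\<forall>q. degree q < Suc j \<longrightarrow> discrete_inner w xs (orth_poly w xs (Suc j)) q = 0"
    and orth_h: "\<forall>q. degree q < j \<longrightarrow> discrete_inner w xs (orth_poly w xs j) q = 0"
    and "discrete_inner w xs (orth_poly w xs j) (orth_poly w xs j) \<noteq> 0"
    and "discrete_inner w xs (orth_poly w xs (Suc j)) (orth_poly w xs (Suc j)) \<noteq> 0"
  shows "\<forall>q. degree q < Suc (Suc j) \<longrightarrow> discrete_inner w xs (orth_poly w xs (Suc (Suc j))) q = 0"
proof -
  let ?f = "orth_poly w xs (Suc j)" and ?h = "orth_poly w xs j"
  let ?P = "orth_poly w xs (Suc (Suc j))"
  let ?a = "rayleigh_quot w xs ?f" and ?b = "norm_ratio w xs ?f ?h"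
  have P_inner: "discrete_inner w xs ?P q
      = discrete_inner w xs ?f ([:0, 1:] * q) - ?a * discrete_inner w xs ?f q - ?b * discrete_inner w xs ?h q" for q
    by (simp only: orth_poly.simps discrete_inner_three_term)
  have deg_f: "degree ?f = Suc j" "monic ?f" and deg_h: "degree ?h = j" "monic ?h"
    using orth_poly_monic[of w xs j] orth_poly_monic[of w xs "Suc j"] by auto
  have f_h: "discrete_inner w xs ?f ?h = 0"
    using orth_f deg_h by simp
  have "degree ([:0, 1:] * ?h - ?f) \<le> Suc j" "coeff ([:0, 1:] * ?h - ?f) (Suc j) = 0"
    using deg_f deg_h by (auto intro: degree_diff_le simp: degree_mult_le)
  hence "[:0, 1:] * ?h - ?f = 0 \<or> degree ([:0, 1:] * ?h - ?f) < Suc j"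
    by (rule eq_zero_or_degree_less)
  hence "discrete_inner w xs ?f ([:0, 1:] * ?h - ?f) = 0"
    using orth_f by auto
  hence f_xh: "discrete_inner w xs ?f ([:0, 1:] * ?h) = discrete_inner w xs ?f ?f"
    using discrete_inner_add_right[of w xs ?f "[:0, 1:] * ?h - ?f" ?f] by simp
  have "\<forall>q. degree q < j \<longrightarrow> discrete_inner w xs ?P q = 0"
  proof (intro allI impI)
    fix q :: "real poly" assume "degree q < j"
    moreover have "degree ([:0, 1:] * q) \<le> degree q + 1"
      using degree_mult_le[of "[:0, 1:]" q] by simp
    ultimately show "discrete_inner w xs ?P q = 0"
      unfolding P_inner using orth_f orth_h by simp
  qed
  moreover have "discrete_inner w xs ?P ?h = 0"
    unfolding P_inner using assms(3) f_xh f_h by (simp add: norm_ratio_def)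
  moreover have "discrete_inner w xs ?P ?f = 0"
    unfolding P_inner using assms(4) f_h discrete_inner_x_shift[of w xs ?f ?f]
    by (simp add: rayleigh_quot_def discrete_inner_commute[of w xs ?h])
  ultimately show ?thesis
    using discrete_inner_orthogonal_extend[of j w xs ?P ?h] discrete_inner_orthogonal_extend[of "Suc j" w xs ?P ?f]
      deg_f deg_h by blast
qed

context
  fixes w :: "nat \<Rightarrow> real" and xs :: "real list"
  assumes weights_pos: "\<And>i. i < length xs \<Longrightarrow> w i > 0" and nodes_distinct: "distinct xs"
begin

lemma discrete_inner_self_eq_0_iff:
  "discrete_inner w xs f f = 0 \<longleftrightarrow> (\<forall>x\<in>set xs. poly f x = 0)"
proof -
  have "discrete_inner w xs f f = 0 \<longleftrightarrow> (\<forall>i<length xs. w i * poly f (xs ! i) * poly f (xs ! i) = 0)"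
    unfolding discrete_inner_def using weights_pos
    by (subst sum_nonneg_eq_0_iff) (auto simp: mult.assoc less_imp_le)
  also have "\<dots> \<longleftrightarrow> (\<forall>x\<in>set xs. poly f x = 0)"
    using weights_pos by (force simp: in_set_conv_nth)
  finally show ?thesis .
qed

lemma discrete_inner_self_nonneg: "discrete_inner w xs f f \<ge> 0"
  unfolding discrete_inner_def using weights_pos
  by (intro sum_nonneg) (simp add: mult.assoc less_imp_le)

lemma discrete_inner_self_pos:
  assumes "f \<noteq> 0" and "degree f < length xs"
  shows "discrete_inner w xs f f > 0"
proof -
  have "discrete_inner w xs f f \<noteq> 0"
  proof
    assume "discrete_inner w xs f f = 0"
    hence "f = 0"
      using assms(2) distinct_card[OF nodes_distinct]
      by (intro poly_eqI_degree[of "set xs"]) (auto simp: discrete_inner_self_eq_0_iff)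
    with assms(1) show False ..
  qed
  with discrete_inner_self_nonneg[of f] show ?thesis
    by linarith
qed

lemma orth_poly_inner_pos: "j < length xs \<Longrightarrow> discrete_inner w xs (orth_poly w xs j) (orth_poly w xs j) > 0"
  using orth_poly_monic[of w xs j] by (intro discrete_inner_self_pos) auto

lemma orth_poly_orthogonal:
  "j \<le> length xs \<Longrightarrow> \<forall>q. degree q < j \<longrightarrow> discrete_inner w xs (orth_poly w xs j) q = 0"
proof (induction j rule: induct_nat_012)
  case 1
  let ?a = "rayleigh_quot w xs 1"
  have "discrete_inner w xs [:- ?a, 1:] 1 = discrete_inner w xs [:0, 1:] 1 - ?a * discrete_inner w xs 1 1"
    unfolding discrete_inner_def by (simp add: algebra_simps sum_subtractf sum_distrib_left)
  moreover have "discrete_inner w xs 1 1 \<noteq> 0"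
    using orth_poly_inner_pos[of 0] 1 by fastforce
  ultimately have "discrete_inner w xs (orth_poly w xs 1) 1 = 0"
    by (simp add: rayleigh_quot_def)
  then show ?case
    using discrete_inner_orthogonal_extend[of 0 w xs "orth_poly w xs 1" 1] by simp
next
  case (ge2 j)
  then show ?case
    using orth_poly_inner_pos[of j] orth_poly_inner_pos[of "Suc j"]
    by (intro orth_poly_Suc_Suc_orthogonal) simp_all
qed simp

lemma orth_poly_length: "orth_poly w xs (length xs) = (\<Prod>x\<leftarrow>xs. [:- x, 1:])"
proof -
  let ?L = "length xs"
  let ?P = "orth_poly w xs ?L" and ?R = "\<Prod>x\<leftarrow>xs. [:- x, 1:]"
  have deg_P: "degree ?P = ?L" "monic ?P"
    using orth_poly_monic[of w xs ?L] by auto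
  have "monic ?R"
    by (rule monic_prod_list) auto
  moreover have "degree ?R = ?L"
    using degree_linear_factors[of uminus xs] by simp
  ultimately have deg_R: "degree ?R = ?L" "monic ?R"
    by simp_all
  have R_roots: "poly ?R x = 0" if "x \<in> set xs" for x
    using that by (auto simp: poly_prod_list prod_list_zero_iff)
  have "?P - ?R = 0 \<or> degree (?P - ?R) < ?L"
    using deg_P deg_R by (intro eq_zero_or_degree_less) (auto intro: degree_diff_le)
  hence "discrete_inner w xs ?P (?P - ?R) = 0"
    using orth_poly_orthogonal[of ?L] by auto
  moreover have "discrete_inner w xs ?P ?R = 0"
    unfolding discrete_inner_def using R_roots by simp
  ultimately have "discrete_inner w xs ?P ?P = 0"
    using discrete_inner_add_right[of w xs ?P "?P - ?R" ?R] by simp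
  hence P_roots: "poly ?P x = 0" if "x \<in> set xs" for x
    using that by (simp add: discrete_inner_self_eq_0_iff)
  show ?thesis
    using deg_P deg_R distinct_card[OF nodes_distinct] P_roots R_roots
    by (intro poly_eqI_degree_lead_coeff[of _ ?L _ "set xs"]) auto
qed

end

section \<open>Jacobi matrices\<close>

definition jacobi_mat :: "nat \<Rightarrow> (nat \<Rightarrow> real) \<Rightarrow> (nat \<Rightarrow> real) \<Rightarrow> real mat" where
  "jacobi_mat n a b = mat n n (\<lambda>(i, j). if i = j then a i else if j = Suc i then b i
      else if i = Suc j then b j else 0)"

lemma jacobi_mat_carrier [simp]: "jacobi_mat n a b \<in> carrier_mat n n"
  unfolding jacobi_mat_def by simp

lemma jacobi_mat_dim [simp]: "dim_row (jacobi_mat n a b) = n" "dim_col (jacobi_mat n a b) = n"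
  unfolding jacobi_mat_def by simp_all

lemma jacobi_mat_index:
  "i < n \<Longrightarrow> j < n \<Longrightarrow> jacobi_mat n a b $$ (i, j) =
     (if i = j then a i else if j = Suc i then b i else if i = Suc j then b j else 0)"
  unfolding jacobi_mat_def by simp

lemma char_poly_jacobi_mat_diagonal:
  assumes "\<And>i. Suc i < n \<Longrightarrow> b i = 0"
  shows "char_poly (jacobi_mat n a b) = (\<Prod>i\<leftarrow>[0..<n]. [:- a i, 1:])"
proof -
  have "upper_triangular (jacobi_mat n a b)"
    using assms by (auto simp: upper_triangular_def jacobi_mat_index)
  moreover have "diag_mat (jacobi_mat n a b) = map a [0..<n]"
    by (intro nth_equalityI) (auto simp: diag_mat_def jacobi_mat_index)
  ultimately show ?thesis
    using char_poly_upper_triangular[OF jacobi_mat_carrier] by (simp add: comp_def)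
qed

lemma char_poly_matrix_dim [simp]:
  "dim_row (char_poly_matrix A) = dim_row A" "dim_col (char_poly_matrix A) = dim_col A"
  unfolding char_poly_matrix_def by simp_all

lemma char_poly_matrix_index:
  assumes "A \<in> carrier_mat n n" and "i < n" and "j < n"
  shows "char_poly_matrix A $$ (i, j) = (if i = j then [:0, 1:] else 0) + [:- (A $$ (i, j)):]"
  using assms unfolding char_poly_matrix_def by auto

text \<open>Expanding the determinant along the last row: the off-diagonal minor has a single
  nonzero entry in its last column, which isolates the leading block of size \<open>j\<close>.\<close>

lemma char_poly_jacobi_mat_Suc_Suc:
  "char_poly (jacobi_mat (Suc (Suc j)) a b) =
     [:- a (Suc j), 1:] * char_poly (jacobi_mat (Suc j) a b) - [:(b j)\<^sup>2:] * char_poly (jacobi_mat j a b)"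
proof -
  let ?n = "Suc (Suc j)"
  define C where "C = char_poly_matrix (jacobi_mat ?n a b)"
  have C: "C \<in> carrier_mat ?n ?n"
    unfolding C_def by simp
  have C_index: "C $$ (x, y) = (if x = y then [:- a x, 1:] else if y = Suc x then [:- b x:]
      else if x = Suc y then [:- b y:] else 0)" if "x < ?n" "y < ?n" for x y
    unfolding C_def using that by (simp add: char_poly_matrix_index[OF jacobi_mat_carrier] jacobi_mat_index)
  have leading_block: "char_poly_matrix (jacobi_mat m a b) = mat_delete (char_poly_matrix (jacobi_mat (Suc m) a b)) m m"
    for m by (rule eq_matI) (auto simp: mat_delete_def char_poly_matrix_index[OF jacobi_mat_carrier] jacobi_mat_index)
  have "det C = (\<Sum>y<?n. C $$ (Suc j, y) * cofactor C (Suc j) y)"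
    by (rule laplace_expansion_row[OF C]) simp
  also have "\<dots> = (\<Sum>y\<in>{j, Suc j}. C $$ (Suc j, y) * cofactor C (Suc j) y)"
    by (rule sum.mono_neutral_right) (auto simp: C_index)
  also have "\<dots> = [:- b j:] * cofactor C (Suc j) j + [:- a (Suc j), 1:] * cofactor C (Suc j) (Suc j)"
    by (simp add: C_index)
  also have "cofactor C (Suc j) (Suc j) = char_poly (jacobi_mat (Suc j) a b)"
    unfolding cofactor_def char_poly_def C_def leading_block[of "Suc j", symmetric] by simp
  also have "cofactor C (Suc j) j = [:b j:] * char_poly (jacobi_mat j a b)"
  proof -
    define E where "E = mat_delete C (Suc j) j"
    have E: "E \<in> carrier_mat (Suc j) (Suc j)"
      unfolding E_def using mat_delete_carrier[OF C] by simp
    have E_index: "E $$ (x, y) = C $$ (x, if y < j then y else Suc y)" if "x < Suc j" "y < Suc j" for x y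
      unfolding E_def mat_delete_def using that C by auto
    have "det E = (\<Sum>x<Suc j. E $$ (x, j) * cofactor E x j)"
      by (rule laplace_expansion_column[OF E]) simp
    also have "\<dots> = (\<Sum>x\<in>{j}. E $$ (x, j) * cofactor E x j)"
      by (rule sum.mono_neutral_right) (auto simp: E_index C_index)
    also have "\<dots> = [:- b j:] * cofactor E j j"
      by (simp add: E_index C_index)
    also have "cofactor E j j = char_poly (jacobi_mat j a b)"
    proof -
      have "mat_delete E j j = char_poly_matrix (jacobi_mat j a b)"
        by (rule eq_matI)
          (use E in \<open>auto simp: mat_delete_def E_index C_index char_poly_matrix_index[OF jacobi_mat_carrier] jacobi_mat_index\<close>)
      then show ?thesis
        by (simp add: cofactor_def char_poly_def)
    qed
    finally have "det E = [:- b j:] * char_poly (jacobi_mat j a b)" .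
    then show ?thesis
      unfolding cofactor_def E_def[symmetric] by simp
  qed
  finally show ?thesis
    unfolding C_def char_poly_def by (simp add: power2_eq_square algebra_simps)
qed

lemma char_poly_jacobi_mat_0 [simp]: "char_poly (jacobi_mat 0 a b) = 1"
  using char_poly_jacobi_mat_diagonal[of 0] by simp

lemma char_poly_jacobi_mat_Suc_0 [simp]: "char_poly (jacobi_mat (Suc 0) a b) = [:- a 0, 1:]"
  using char_poly_jacobi_mat_diagonal[of "Suc 0"] by simp

lemma char_poly_jacobi_mat_decouple:
  assumes "r = 0 \<or> b (r - 1) = 0"
  shows "char_poly (jacobi_mat (r + j) a b) =
    char_poly (jacobi_mat r a b) * char_poly (jacobi_mat j (\<lambda>i. a (r + i)) (\<lambda>i. b (r + i)))"
proof (induction j rule: induct_nat_012)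
  case 1
  show ?case
  proof (cases r)
    case (Suc r')
    then have "b r' = 0"
      using assms by simp
    then show ?thesis
      using char_poly_jacobi_mat_Suc_Suc[of r' a b] Suc by (simp add: mult.commute)
  qed simp
next
  case (ge2 j)
  let ?a = "\<lambda>i. a (r + i)" and ?b = "\<lambda>i. b (r + i)"
  have "char_poly (jacobi_mat (Suc (Suc (r + j))) a b) =
      [:- a (Suc (r + j)), 1:] * char_poly (jacobi_mat (Suc (r + j)) a b)
      - [:(b (r + j))\<^sup>2:] * char_poly (jacobi_mat (r + j) a b)"
    by (rule char_poly_jacobi_mat_Suc_Suc)
  also have "\<dots> = char_poly (jacobi_mat r a b) *
      ([:- ?a (Suc j), 1:] * char_poly (jacobi_mat (Suc j) ?a ?b) - [:(?b j)\<^sup>2:] * char_poly (jacobi_mat j ?a ?b))"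
    using ge2.IH by (simp add: algebra_simps)
  also have "\<dots> = char_poly (jacobi_mat r a b) * char_poly (jacobi_mat (Suc (Suc j)) ?a ?b)"
    by (simp only: char_poly_jacobi_mat_Suc_Suc)
  finally show ?case
    by simp
qed simp

text \<open>The inverse eigenvalue problem for Jacobi matrices: the three-term recurrence of the
  orthogonal polynomials is exactly the cofactor recurrence of a Jacobi matrix.\<close>

lemma jacobi_mat_with_spectrum:
  assumes "distinct xs" and "\<And>i. i < length xs \<Longrightarrow> w i > 0"
  shows "\<exists>a b. char_poly (jacobi_mat (length xs) a b) = (\<Prod>x\<leftarrow>xs. [:- x, 1:]) \<and>
     (\<forall>j. Suc j < length xs \<longrightarrow> b j \<noteq> 0) \<and>
     a 0 = (\<Sum>i<length xs. w i * xs ! i) / (\<Sum>i<length xs. w i)"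
proof -
  define a where "a j = rayleigh_quot w xs (orth_poly w xs j)" for j
  define b where "b j = sqrt (norm_ratio w xs (orth_poly w xs (Suc j)) (orth_poly w xs j))" for j
  have b_sq: "(b j)\<^sup>2 = norm_ratio w xs (orth_poly w xs (Suc j)) (orth_poly w xs j)" for j
    unfolding b_def norm_ratio_def using assms
    by (intro real_sqrt_pow2 divide_nonneg_nonneg discrete_inner_self_nonneg)
  have "char_poly (jacobi_mat j a b) = orth_poly w xs j" for j
  proof (induction j rule: induct_nat_012)
    case (ge2 j)
    then show ?case
      by (simp add: char_poly_jacobi_mat_Suc_Suc b_sq a_def)
  qed (simp_all add: a_def)
  moreover have "b j \<noteq> 0" if "Suc j < length xs" for j
    using that assms orth_poly_inner_pos[of xs w j] orth_poly_inner_pos[of xs w "Suc j"]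
    by (simp add: b_def norm_ratio_def)
  moreover have "a 0 = (\<Sum>i<length xs. w i * xs ! i) / (\<Sum>i<length xs. w i)"
    by (simp add: a_def rayleigh_quot_def discrete_inner_def mult.commute)
  ultimately show ?thesis
    using orth_poly_length[of xs w] assms by (intro exI[of _ a] exI[of _ b]) auto
qed

section \<open>Householder reflections\<close>

lemma mult_mat_index:
  assumes "A \<in> carrier_mat n n" and "B \<in> carrier_mat n n" and "i < n" and "j < n"
  shows "(A * B) $$ (i, j) = (\<Sum>l<n. A $$ (i, l) * B $$ (l, j))"
  using assms by (auto simp: scalar_prod_def lessThan_atLeast0 intro!: sum.cong)

lemma sum_of_bool_eq_left: "finite A \<Longrightarrow> i \<in> A \<Longrightarrow> (\<Sum>l\<in>A. of_bool (i = l) * f l) = (f i :: 'a :: comm_ring_1)"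
  by (subst sum.remove[of _ i]) auto

lemma sum_of_bool_eq_right: "finite A \<Longrightarrow> j \<in> A \<Longrightarrow> (\<Sum>l\<in>A. f l * of_bool (l = j)) = (f j :: 'a :: comm_ring_1)"
  by (subst sum.remove[of _ j]) auto

definition householder :: "nat \<Rightarrow> (nat \<Rightarrow> real) \<Rightarrow> real mat" where
  "householder n w = mat n n (\<lambda>(i, j). of_bool (i = j) - 2 * w i * w j / (\<Sum>l<n. (w l)\<^sup>2))"

lemma householder_carrier [simp]: "householder n w \<in> carrier_mat n n"
  unfolding householder_def by simp

lemma householder_dim [simp]: "dim_row (householder n w) = n" "dim_col (householder n w) = n"
  unfolding householder_def by simp_all

lemma householder_index:
  "i < n \<Longrightarrow> j < n \<Longrightarrow> householder n w $$ (i, j) = of_bool (i = j) - 2 * w i * w j / (\<Sum>l<n. (w l)\<^sup>2)"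
  unfolding householder_def by simp

lemma householder_involution:
  assumes "(\<Sum>l<n. (w l)\<^sup>2) \<noteq> 0"
  shows "householder n w * householder n w = 1\<^sub>m n"
proof (rule eq_matI)
  fix i j assume "i < dim_row (1\<^sub>m n :: real mat)" "j < dim_col (1\<^sub>m n :: real mat)"
  hence ij: "i < n" "j < n" by auto
  define s where "s = (\<Sum>l<n. (w l)\<^sup>2)"
  have "(householder n w * householder n w) $$ (i, j)
      = (\<Sum>l<n. (of_bool (i = l) - 2 * w i * w l / s) * (of_bool (l = j) - 2 * w l * w j / s))"
    using ij by (subst mult_mat_index[OF householder_carrier householder_carrier ij])
      (rule sum.cong, simp_all add: householder_index s_def)
  also have "\<dots> = (\<Sum>l<n. of_bool (i = l) * of_bool (l = j)) - (\<Sum>l<n. of_bool (i = l) * (2 * w l * w j / s))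
      - (\<Sum>l<n. (2 * w i * w l / s) * of_bool (l = j)) + (\<Sum>l<n. 4 * w i * w j / s\<^sup>2 * (w l)\<^sup>2)"
    by (simp add: sum_subtractf sum.distrib ring_distribs power2_eq_square mult.commute mult.left_commute)
  also have "\<dots> = of_bool (i = j) - 4 * w i * w j / s + 4 * w i * w j / s\<^sup>2 * s"
    using ij by (simp only: sum_of_bool_eq_left sum_of_bool_eq_right finite_lessThan lessThan_iff
        sum_distrib_left[symmetric] s_def[symmetric])
  also have "\<dots> = of_bool (i = j)"
    using assms by (simp add: s_def power2_eq_square)
  finally show "(householder n w * householder n w) $$ (i, j) = 1\<^sub>m n $$ (i, j)"
    using ij by simp
qed simp_all

lemma householder_mult_right_index:
  assumes "X \<in> carrier_mat n n" and "i < n" and "j < n"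
  shows "(X * householder n w) $$ (i, j)
    = X $$ (i, j) - 2 / (\<Sum>l<n. (w l)\<^sup>2) * (\<Sum>l<n. X $$ (i, l) * w l) * w j"
proof -
  have "(X * householder n w) $$ (i, j)
      = (\<Sum>l<n. X $$ (i, l) * of_bool (l = j)) - (\<Sum>l<n. X $$ (i, l) * (2 * w l * w j / (\<Sum>l<n. (w l)\<^sup>2)))"
    using assms by (subst mult_mat_index[OF assms(1) householder_carrier assms(2,3)])
      (simp add: householder_index right_diff_distrib sum_subtractf)
  then show ?thesis
    using assms by (simp add: sum_of_bool_eq_right sum_distrib_left sum_divide_distrib mult_ac)
qed

lemma householder_mult_left_index:
  assumes "X \<in> carrier_mat n n" and "i < n" and "j < n"
  shows "(householder n w * X) $$ (i, j)
    = X $$ (i, j) - 2 / (\<Sum>l<n. (w l)\<^sup>2) * w i * (\<Sum>l<n. w l * X $$ (l, j))"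
proof -
  have "(householder n w * X) $$ (i, j)
      = (\<Sum>l<n. of_bool (i = l) * X $$ (l, j)) - (\<Sum>l<n. (2 * w i * w l / (\<Sum>l<n. (w l)\<^sup>2)) * X $$ (l, j))"
    using assms by (subst mult_mat_index[OF householder_carrier assms(1) assms(2,3)])
      (simp add: householder_index left_diff_distrib sum_subtractf)
  then show ?thesis
    using assms by (simp add: sum_of_bool_eq_left sum_distrib_left sum_divide_distrib mult_ac)
qed

lemma householder_conj_index:
  fixes w :: "nat \<Rightarrow> real"
  assumes N: "N \<in> carrier_mat n n" and N_sym: "\<And>i j. i < n \<Longrightarrow> j < n \<Longrightarrow> N $$ (i, j) = N $$ (j, i)"
    and ij: "i < n" "j < n"
  defines "c \<equiv> 2 / (\<Sum>l<n. (w l)\<^sup>2)" and "g \<equiv> \<lambda>x. \<Sum>l<n. N $$ (x, l) * w l"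
  shows "(householder n w * N * householder n w) $$ (i, j)
    = N $$ (i, j) - c * (w i * g j + g i * w j) + c\<^sup>2 * w i * w j * (\<Sum>l<n. w l * g l)"
proof -
  have HN: "(householder n w * N) $$ (x, l) = N $$ (x, l) - c * w x * g l" if "x < n" "l < n" for x l
    using that by (simp add: householder_mult_left_index[OF N] c_def g_def N_sym mult.commute)
  have "(\<Sum>l<n. (householder n w * N) $$ (i, l) * w l)
      = (\<Sum>l<n. N $$ (i, l) * w l) - c * w i * (\<Sum>l<n. w l * g l)"
    using ij by (simp add: HN algebra_simps sum_subtractf sum_distrib_left)
  also have "\<dots> = g i - c * w i * (\<Sum>l<n. w l * g l)"
    by (simp add: g_def)
  finally have HN_w: "(\<Sum>l<n. (householder n w * N) $$ (i, l) * w l) = g i - c * w i * (\<Sum>l<n. w l * g l)" .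
  have "(householder n w * N * householder n w) $$ (i, j)
      = (householder n w * N) $$ (i, j) - c * (\<Sum>l<n. (householder n w * N) $$ (i, l) * w l) * w j"
    unfolding c_def by (rule householder_mult_right_index[OF mult_carrier_mat[OF householder_carrier N] ij])
  also have "\<dots> = N $$ (i, j) - c * w i * g j - c * (g i - c * w i * (\<Sum>l<n. w l * g l)) * w j"
    by (simp only: HN[OF ij] HN_w)
  finally show ?thesis
    by (simp add: algebra_simps power2_eq_square)
qed

section \<open>Realizing a spectrum on the lollipop graph\<close>

lemma is_spectrum_mset: "is_spectrum (mset es) A \<longleftrightarrow> char_poly A = (\<Prod>a\<leftarrow>es. [:- a, 1:])"
  unfolding is_spectrum_def by (simp add: prod_mset_prod_list flip: mset_map)

lemma ex_nonzero_common_non_root: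
  assumes "finite F" and "0 \<notin> F"
  shows "\<exists>x::real. x \<noteq> 0 \<and> (\<forall>f\<in>F. poly f x \<noteq> 0)"
proof -
  have "finite (insert 0 (\<Union>f\<in>F. {x. poly f x = 0}))"
    using assms by (auto intro: poly_roots_finite)
  then obtain x :: real where "x \<notin> insert 0 (\<Union>f\<in>F. {x. poly f x = 0})"
    using ex_new_if_finite[OF infinite_UNIV_char_0] by blast
  then show ?thesis
    by blast
qed

lemma even_poly_nonzero:
  assumes "l0 \<le> r" and "c l0 \<noteq> 0"
  shows "(\<Sum>l\<le>r. monom (c l) (2 * l)) \<noteq> 0"
proof
  assume "(\<Sum>l\<le>r. monom (c l) (2 * l)) = 0"
  hence "coeff (\<Sum>l\<le>r. monom (c l) (2 * l)) (2 * l0) = 0"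
    by simp
  with assms show False
    by (simp add: coeff_sum)
qed

lemma ex_generic_geometric_parameter:
  fixes \<alpha> :: "nat \<Rightarrow> real"
  assumes "0 < r \<Longrightarrow> \<alpha> 0 \<noteq> \<alpha> r"
  shows "\<exists>t. t \<noteq> 0 \<and> (\<Sum>l\<le>r. t ^ (2 * l)) \<noteq> 2 * t ^ (2 * r) \<and>
    (\<forall>i\<le>r. \<forall>j\<le>r. i \<noteq> j \<longrightarrow> 2 * (\<Sum>l\<le>r. \<alpha> l * t ^ (2 * l)) \<noteq> (\<Sum>l\<le>r. t ^ (2 * l)) * (\<alpha> i + \<alpha> j))"
proof -
  define even_poly :: "(nat \<Rightarrow> real) \<Rightarrow> real poly" where
    "even_poly c = (\<Sum>l\<le>r. monom (c l) (2 * l))" for c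
  have poly_even_poly: "poly (even_poly c) t = (\<Sum>l\<le>r. c l * t ^ (2 * l))" for c t
    by (simp add: even_poly_def poly_sum poly_monom)
  define C where "C = insert (\<lambda>l. 1 - 2 * of_bool (l = r))
    ((\<lambda>(i, j) l. 2 * \<alpha> l - \<alpha> i - \<alpha> j) ` {(i, j). i \<le> r \<and> j \<le> r \<and> i \<noteq> j})"
  have "\<exists>l0\<le>r. c l0 \<noteq> 0" if "c \<in> C" for c
  proof -
    have "\<exists>l0\<le>r. 2 * \<alpha> l0 - \<alpha> i - \<alpha> j \<noteq> 0" if "i \<le> r" "j \<le> r" "i \<noteq> j" for i j
    proof (cases "\<alpha> i = \<alpha> j")
      case True
      with that assms have "\<alpha> 0 \<noteq> \<alpha> i \<or> \<alpha> r \<noteq> \<alpha> i"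
        by (cases "r = 0") auto
      then show ?thesis
        using True by auto
    qed (use that in auto)
    with that show ?thesis
      unfolding C_def by (cases "r = 0") auto
  qed
  hence "0 \<notin> even_poly ` C"
    unfolding even_poly_def using even_poly_nonzero by fastforce
  moreover have "finite C"
    unfolding C_def by (auto intro: finite_subset[of _ "{..r} \<times> {..r}"])
  ultimately obtain t where t: "t \<noteq> 0" "\<forall>c\<in>C. poly (even_poly c) t \<noteq> 0"
    using ex_nonzero_common_non_root[of "even_poly ` C"] by auto
  have "(\<Sum>l\<le>r. (1 - 2 * of_bool (l = r)) * t ^ (2 * l)) \<noteq> 0"
    using t(2) by (auto simp: C_def poly_even_poly)
  hence "(\<Sum>l\<le>r. t ^ (2 * l)) \<noteq> 2 * t ^ (2 * r)"
    by (simp add: left_diff_distrib sum_subtractf mult.assoc sum_distrib_left[symmetric] sum_of_bool_eq_right)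
  moreover have "2 * (\<Sum>l\<le>r. \<alpha> l * t ^ (2 * l)) \<noteq> (\<Sum>l\<le>r. t ^ (2 * l)) * (\<alpha> i + \<alpha> j)"
    if "i \<le> r" "j \<le> r" "i \<noteq> j" for i j
  proof -
    have "(\<Sum>l\<le>r. (2 * \<alpha> l - \<alpha> i - \<alpha> j) * t ^ (2 * l)) \<noteq> 0"
      using t(2) that by (auto simp: C_def poly_even_poly)
    then show ?thesis
      by (simp add: algebra_simps sum_subtractf sum_distrib_left sum_distrib_right sum.distrib)
  qed
  ultimately show ?thesis
    using t(1) by blast
qed

lemma ex_pos_weights_mean_neq:
  fixes xs :: "real list"
  assumes "distinct xs" and "length xs \<ge> 2"
  shows "\<exists>w. (\<forall>i<length xs. w i > 0) \<and> (\<Sum>i<length xs. w i * xs ! i) / (\<Sum>i<length xs. w i) \<noteq> c"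
proof -
  let ?L = "length xs"
  define D where "D w = (\<Sum>i<?L. w i * (xs ! i - c))" for w :: "nat \<Rightarrow> real"
  have mean_neq_iff: "(\<Sum>i<?L. w i * xs ! i) / (\<Sum>i<?L. w i) \<noteq> c \<longleftrightarrow> D w \<noteq> 0"
    if "\<forall>i<?L. w i > 0" for w
  proof -
    have "(\<Sum>i<?L. w i) > 0"
      using that assms(2) by (intro sum_pos) (auto simp: lessThan_empty_iff)
    then show ?thesis
      by (simp add: D_def field_simps right_diff_distrib sum_subtractf sum_distrib_left)
  qed
  have L: "0 < ?L" "1 < ?L"
    using assms(2) by linarith+
  hence "xs ! 0 \<noteq> xs ! 1"
    using nth_eq_iff_index_eq[OF assms(1) L] by simp
  then obtain j0 where j0: "j0 < ?L" "xs ! j0 \<noteq> c"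
    using L by (cases "xs ! 0 = c") auto
  define w1 :: "nat \<Rightarrow> real" where "w1 i = 1 + of_bool (i = j0)" for i
  have "D w1 = D (\<lambda>_. 1) + (xs ! j0 - c)"
    using j0 by (simp add: D_def w1_def distrib_right sum.distrib sum_of_bool_eq_right)
  hence "D (\<lambda>_. 1) \<noteq> 0 \<or> D w1 \<noteq> 0"
    using j0 by auto
  then show ?thesis
  proof
    assume "D (\<lambda>_. 1) \<noteq> 0"
    then show ?thesis
      using mean_neq_iff[of "\<lambda>_. 1"] by (intro exI[of _ "\<lambda>_. 1"]) simp
  next
    assume "D w1 \<noteq> 0"
    moreover have "\<forall>i<?L. w1 i > 0"
      by (simp add: w1_def add_pos_nonneg)
    ultimately show ?thesis
      using mean_neq_iff[of w1] by blast
  qed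
qed

lemma char_poly_jacobi_mat_diagonal_block:
  assumes "length ds = r"
  shows "char_poly (jacobi_mat (r + m) (\<lambda>i. if i < r then ds ! i else a (i - r))
      (\<lambda>i. if i < r then 0 else b (i - r)))
    = (\<Prod>x\<leftarrow>ds. [:- x, 1:]) * char_poly (jacobi_mat m a b)"
proof -
  let ?a = "\<lambda>i. if i < r then ds ! i else a (i - r)" and ?b = "\<lambda>i. if i < r then 0 else b (i - r)"
  have "char_poly (jacobi_mat r ?a ?b) = (\<Prod>i\<leftarrow>[0..<r]. [:- ds ! i, 1:])"
    by (subst char_poly_jacobi_mat_diagonal) (auto intro: arg_cong[where f = prod_list])
  also have "\<dots> = (\<Prod>x\<leftarrow>ds. [:- x, 1:])"
    using assms by (subst map_nth[symmetric]) (simp add: comp_def)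
  moreover have "char_poly (jacobi_mat (r + m) ?a ?b)
      = char_poly (jacobi_mat r ?a ?b) * char_poly (jacobi_mat m (\<lambda>i. ?a (r + i)) (\<lambda>i. ?b (r + i)))"
    by (rule char_poly_jacobi_mat_decouple) (cases r; simp)
  ultimately show ?thesis
    by simp
qed

lemma jacobi_mat_mult_truncated_geometric:
  assumes "\<And>i. i < r \<Longrightarrow> \<beta> i = 0" and "x < n" and "Suc r < n"
  shows "(\<Sum>l<n. jacobi_mat n \<alpha> \<beta> $$ (x, l) * (if l \<le> r then t ^ l else 0))
    = (if x \<le> r then \<alpha> x * t ^ x else if x = Suc r then \<beta> r * t ^ r else 0)"
proof -
  let ?N = "jacobi_mat n \<alpha> \<beta>"
  have "(\<Sum>l<n. ?N $$ (x, l) * (if l \<le> r then t ^ l else 0)) = (\<Sum>l\<le>r. ?N $$ (x, l) * t ^ l)"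
    using assms(3) by (subst sum.mono_neutral_right[of _ "{..r}"]) auto
  also have "\<dots> = (if x \<le> r then \<alpha> x * t ^ x else if x = Suc r then \<beta> r * t ^ r else 0)"
  proof (cases "x \<le> r \<or> x = Suc r")
    case True
    let ?c = "if x \<le> r then x else r"
    have "(\<Sum>l\<le>r. ?N $$ (x, l) * t ^ l) = ?N $$ (x, ?c) * t ^ ?c"
      using assms True by (subst sum.mono_neutral_right[of _ "{?c}"]) (auto simp: jacobi_mat_index)
    then show ?thesis
      using assms True by (auto simp: jacobi_mat_index)
  next
    case False
    then show ?thesis
      using assms by (auto intro!: sum.neutral simp: jacobi_mat_index)
  qed
  finally show ?thesis .
qed

lemma householder_jacobi_mat_index:
  fixes \<alpha> \<beta> :: "nat \<Rightarrow> real" and t :: real and r n :: nat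
  defines "w \<equiv> \<lambda>l. if l \<le> r then t ^ l else 0"
    and "g \<equiv> \<lambda>x. if x \<le> r then \<alpha> x * t ^ x else if x = Suc r then \<beta> r * t ^ r else 0"
    and "s \<equiv> \<Sum>l\<le>r. t ^ (2 * l)" and "\<theta> \<equiv> \<Sum>l\<le>r. \<alpha> l * t ^ (2 * l)"
  assumes "\<And>i. i < r \<Longrightarrow> \<beta> i = 0" and "Suc r < n" and "i < n" and "j < n"
  shows "(householder n w * jacobi_mat n \<alpha> \<beta> * householder n w) $$ (i, j)
    = jacobi_mat n \<alpha> \<beta> $$ (i, j) - 2 / s * (w i * g j + g i * w j) + (2 / s)\<^sup>2 * w i * w j * \<theta>"
proof -
  have w_sq: "(\<Sum>l<n. (w l)\<^sup>2) = s"
  proof -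
    have "(\<Sum>l<n. (w l)\<^sup>2) = (\<Sum>l\<le>r. (w l)\<^sup>2)"
      using assms(6) by (intro sum.mono_neutral_right) (auto simp: w_def)
    then show ?thesis
      by (simp add: s_def w_def power_mult[symmetric] mult.commute)
  qed
  have Nw: "(\<Sum>l<n. jacobi_mat n \<alpha> \<beta> $$ (x, l) * w l) = g x" if "x < n" for x
    unfolding w_def g_def using jacobi_mat_mult_truncated_geometric[OF assms(5) that assms(6)] .
  have "(\<Sum>l<n. w l * (\<Sum>l'<n. jacobi_mat n \<alpha> \<beta> $$ (l, l') * w l')) = (\<Sum>l<n. w l * g l)"
    by (simp add: Nw)
  also have "\<dots> = (\<Sum>l\<le>r. w l * g l)"
    using assms(6) by (intro sum.mono_neutral_right) (auto simp: w_def)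
  also have "\<dots> = \<theta>"
    unfolding \<theta>_def by (intro sum.cong) (auto simp: w_def g_def mult_2 power_add)
  finally have "(\<Sum>l<n. w l * (\<Sum>l'<n. jacobi_mat n \<alpha> \<beta> $$ (l, l') * w l')) = \<theta>" .
  moreover have "jacobi_mat n \<alpha> \<beta> $$ (x, y) = jacobi_mat n \<alpha> \<beta> $$ (y, x)" if "x < n" "y < n" for x y
    using that by (auto simp: jacobi_mat_index)
  ultimately show ?thesis
    using householder_conj_index[OF jacobi_mat_carrier _ assms(7,8), where w = w]
    by (simp only: Nw assms(7,8) w_sq)
qed

lemma lollipop_edge_sym: "lollipop_edge k p i j = lollipop_edge k p j i"
  unfolding lollipop_edge_def by auto

lemma householder_jacobi_mat_lollipop_entry:
  fixes \<alpha> \<beta> :: "nat \<Rightarrow> real" and t :: real and r p :: nat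
  defines "n \<equiv> r + 2 + p" and "w \<equiv> \<lambda>l. if l \<le> r then t ^ l else 0"
  assumes \<beta>_clique: "\<And>i. i < r \<Longrightarrow> \<beta> i = 0" and \<beta>_path: "\<And>i. r \<le> i \<Longrightarrow> Suc i < n \<Longrightarrow> \<beta> i \<noteq> 0"
    and t_nonzero: "t \<noteq> 0" and t_last: "(\<Sum>l\<le>r. t ^ (2 * l)) \<noteq> 2 * t ^ (2 * r)"
    and t_clique: "\<And>i j. i \<le> r \<Longrightarrow> j \<le> r \<Longrightarrow> i \<noteq> j \<Longrightarrow>
      2 * (\<Sum>l\<le>r. \<alpha> l * t ^ (2 * l)) \<noteq> (\<Sum>l\<le>r. t ^ (2 * l)) * (\<alpha> i + \<alpha> j)"
    and ij: "i < j" "j < n"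
  shows "(householder n w * jacobi_mat n \<alpha> \<beta> * householder n w) $$ (i, j) \<noteq> 0 \<longleftrightarrow> lollipop_edge (r + 2) p i j"
proof -
  define M where "M = householder n w * jacobi_mat n \<alpha> \<beta> * householder n w"
  define g where "g x = (if x \<le> r then \<alpha> x * t ^ x else if x = Suc r then \<beta> r * t ^ r else 0)" for x
  define s where "s = (\<Sum>l\<le>r. t ^ (2 * l))"
  define \<theta> where "\<theta> = (\<Sum>l\<le>r. \<alpha> l * t ^ (2 * l))"
  have M_index: "M $$ (i, j) = jacobi_mat n \<alpha> \<beta> $$ (i, j) - 2 / s * (w i * g j + g i * w j) + (2 / s)\<^sup>2 * w i * w j * \<theta>"
    unfolding M_def w_def g_def s_def \<theta>_def
    using householder_jacobi_mat_index[OF \<beta>_clique _ _ ij(2)] ij by (simp add: n_def)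
  have "s \<ge> 1"
    unfolding s_def using member_le_sum[of 0 "{..r}" "\<lambda>l. t ^ (2 * l)"] by (simp add: power_mult)
  hence s_pos: "s > 0"
    by simp
  consider "j \<le> r" | "i \<le> r" "j = Suc r" | "i \<le> r" "Suc (Suc r) \<le> j" | "r < i"
    using ij by linarith
  then have "M $$ (i, j) \<noteq> 0 \<longleftrightarrow> lollipop_edge (r + 2) p i j"
  proof cases
    case 1
    have "M $$ (i, j) = 2 / s * t ^ i * t ^ j * (2 / s * \<theta> - \<alpha> i - \<alpha> j)"
      using ij 1 s_pos \<beta>_clique[of i] by (simp add: M_index jacobi_mat_index w_def g_def field_simps power2_eq_square)
    moreover have "2 / s * \<theta> - \<alpha> i - \<alpha> j \<noteq> 0"
      using t_clique[of i j] ij 1 s_pos by (simp add: s_def \<theta>_def field_simps)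
    ultimately show ?thesis
      using ij 1 s_pos t_nonzero by (simp add: lollipop_edge_def n_def)
  next
    case 2
    have "M $$ (i, j) = \<beta> r * (of_bool (i = r) - 2 / s * t ^ i * t ^ r)"
      unfolding M_index using ij 2 by (auto simp: jacobi_mat_index w_def g_def algebra_simps)
    moreover have "of_bool (i = r) - 2 / s * t ^ i * t ^ r \<noteq> 0"
    proof (cases "i = r")
      case True
      have "1 - 2 / s * t ^ r * t ^ r = (s - 2 * (t ^ r * t ^ r)) / s"
        using s_pos by (simp add: field_simps)
      moreover have "t ^ r * t ^ r = t ^ (2 * r)"
        by (simp add: mult_2 power_add)
      ultimately show ?thesis
        using True t_last s_pos by (simp add: s_def)
    qed (use s_pos t_nonzero in simp)
    ultimately show ?thesis
      using ij 2 \<beta>_path[of r] by (simp add: lollipop_edge_def n_def)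
  next
    case 3
    then show ?thesis
      using ij by (simp add: M_index jacobi_mat_index w_def g_def lollipop_edge_def)
  next
    case 4
    then show ?thesis
      unfolding M_index using ij \<beta>_path[of i] by (auto simp: jacobi_mat_index w_def lollipop_edge_def n_def)
  qed
  then show ?thesis
    by (simp only: M_def)
qed

lemma householder_transpose [simp]: "transpose_mat (householder n w) = householder n w"
  by (rule eq_matI) (simp_all add: householder_index mult.commute)

lemma jacobi_mat_transpose [simp]: "transpose_mat (jacobi_mat n a b) = jacobi_mat n a b"
  by (rule eq_matI) (auto simp: jacobi_mat_index)

lemma householder_jacobi_mat_lollipop_pattern:
  fixes \<alpha> \<beta> :: "nat \<Rightarrow> real" and t :: real and r p :: nat
  defines "n \<equiv> r + 2 + p" and "w \<equiv> \<lambda>l. if l \<le> r then t ^ l else 0"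
  assumes "\<And>i. i < r \<Longrightarrow> \<beta> i = 0" and "\<And>i. r \<le> i \<Longrightarrow> Suc i < n \<Longrightarrow> \<beta> i \<noteq> 0"
    and "t \<noteq> 0" and "(\<Sum>l\<le>r. t ^ (2 * l)) \<noteq> 2 * t ^ (2 * r)"
    and "\<And>i j. i \<le> r \<Longrightarrow> j \<le> r \<Longrightarrow> i \<noteq> j \<Longrightarrow>
      2 * (\<Sum>l\<le>r. \<alpha> l * t ^ (2 * l)) \<noteq> (\<Sum>l\<le>r. t ^ (2 * l)) * (\<alpha> i + \<alpha> j)"
  shows "householder n w * jacobi_mat n \<alpha> \<beta> * householder n w \<in> sym_pattern n (lollipop_edge (r + 2) p)"
proof -
  define M where "M = householder n w * jacobi_mat n \<alpha> \<beta> * householder n w"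
  have M: "M \<in> carrier_mat n n"
    unfolding M_def by (meson householder_carrier jacobi_mat_carrier mult_carrier_mat)
  have M_sym: "transpose_mat M = M"
    unfolding M_def transpose_mult[OF mult_carrier_mat[OF householder_carrier jacobi_mat_carrier] householder_carrier]
      transpose_mult[OF householder_carrier jacobi_mat_carrier]
    by (simp add: assoc_mult_mat[of _ n n _ n _ n])
  have upper: "M $$ (i, j) \<noteq> 0 \<longleftrightarrow> lollipop_edge (r + 2) p i j" if "i < j" "j < n" for i j
    unfolding M_def n_def w_def using assms(3-7) that
    by (intro householder_jacobi_mat_lollipop_entry) (simp_all add: n_def)
  have "M $$ (i, j) = M $$ (j, i)" if "i < n" "j < n" for i j
    using M M_sym that by (metis carrier_matD index_transpose_mat(1))
  with upper lollipop_edge_sym have "M $$ (i, j) \<noteq> 0 \<longleftrightarrow> lollipop_edge (r + 2) p i j"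
    if "i < n" "j < n" "i \<noteq> j" for i j
    using that by (cases "i < j") (metis, metis linorder_neqE_nat)
  with M M_sym show ?thesis
    unfolding M_def[symmetric] sym_pattern_def by blast
qed

lemma char_poly_householder_conj:
  assumes "N \<in> carrier_mat n n" and "(\<Sum>l<n. (w l)\<^sup>2) \<noteq> 0"
  shows "char_poly (householder n w * N * householder n w) = char_poly N"
  using householder_involution[OF assms(2)] assms(1)
  by (intro char_poly_similar similar_matI) auto

lemma lollipop_realization:
  fixes ds xs :: "real list"
  assumes "k \<ge> 2" and "p \<ge> 1" and "length ds = k - 2" and "distinct xs" and "length xs = p + 2"
  shows "\<exists>A \<in> sym_pattern (k + p) (lollipop_edge k p). is_spectrum (mset (ds @ xs)) A"
proof -
  define r where "r = k - 2"
  have k: "k = r + 2" and n: "k + p = r + (p + 2)"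
    using assms(1) by (simp_all add: r_def)
  (* For k = 2 the list ds is empty and ds ! 0 is an unspecified real; the constraint is then unused. *)
  obtain \<omega> where "\<forall>i<length xs. \<omega> i > 0"
    and mean: "(\<Sum>i<length xs. \<omega> i * xs ! i) / (\<Sum>i<length xs. \<omega> i) \<noteq> ds ! 0"
    using ex_pos_weights_mean_neq[OF assms(4)] assms(5) by auto
  then obtain a b where cp_J: "char_poly (jacobi_mat (p + 2) a b) = (\<Prod>x\<leftarrow>xs. [:- x, 1:])"
    and b_nonzero: "\<forall>j. Suc j < p + 2 \<longrightarrow> b j \<noteq> 0" and "a 0 \<noteq> ds ! 0"
    using jacobi_mat_with_spectrum[OF assms(4)] mean assms(5) by metis
  define \<alpha> where "\<alpha> i = (if i < r then ds ! i else a (i - r))" for i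
  define \<beta> where "\<beta> i = (if i < r then 0 else b (i - r))" for i
  define N where "N = jacobi_mat (k + p) \<alpha> \<beta>"
  have "length ds = r"
    using assms(3) by (simp add: r_def)
  from char_poly_jacobi_mat_diagonal_block[OF this, of "p + 2" a b]
  have cp_N: "char_poly N = (\<Prod>x\<leftarrow>ds. [:- x, 1:]) * (\<Prod>x\<leftarrow>xs. [:- x, 1:])"
    unfolding N_def n \<alpha>_def \<beta>_def cp_J .
  have "0 < r \<Longrightarrow> \<alpha> 0 \<noteq> \<alpha> r"
    using \<open>a 0 \<noteq> ds ! 0\<close> by (simp add: \<alpha>_def)
  then obtain t where t: "t \<noteq> 0" "(\<Sum>l\<le>r. t ^ (2 * l)) \<noteq> 2 * t ^ (2 * r)"
    "\<forall>i\<le>r. \<forall>j\<le>r. i \<noteq> j \<longrightarrow> 2 * (\<Sum>l\<le>r. \<alpha> l * t ^ (2 * l)) \<noteq> (\<Sum>l\<le>r. t ^ (2 * l)) * (\<alpha> i + \<alpha> j)"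
    using ex_generic_geometric_parameter by blast
  define v where "v l = (if l \<le> r then t ^ l else 0)" for l
  define H where "H = householder (k + p) v"
  have "(\<Sum>l<k + p. (v l)\<^sup>2) \<ge> (v 0)\<^sup>2"
    using assms(1) by (intro member_le_sum) auto
  hence "char_poly (H * N * H) = char_poly N"
    unfolding H_def N_def by (intro char_poly_householder_conj) (simp_all add: v_def)
  moreover have "H * N * H \<in> sym_pattern (k + p) (lollipop_edge k p)"
    unfolding H_def N_def k v_def
    using b_nonzero t by (intro householder_jacobi_mat_lollipop_pattern) (auto simp: \<beta>_def)
  ultimately show ?thesis
    using cp_N by (metis is_spectrum_mset prod_list.append map_append)
qed

section \<open>Distinct eigenvalues and unique shortest paths\<close>

fun shifted_prod :: "'a :: comm_ring_1 mat \<Rightarrow> nat \<Rightarrow> 'a list \<Rightarrow> 'a mat" where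
  "shifted_prod A n [] = 1\<^sub>m n"
| "shifted_prod A n (e # es) = (A - e \<cdot>\<^sub>m 1\<^sub>m n) * shifted_prod A n es"

lemma shift_carrier [simp]: "A - e \<cdot>\<^sub>m 1\<^sub>m n \<in> carrier_mat n n"
  by (simp add: minus_mat_def carrier_matI)

lemma shift_index: "i < n \<Longrightarrow> j < n \<Longrightarrow> (A - e \<cdot>\<^sub>m 1\<^sub>m n) $$ (i, j) = A $$ (i, j) - e * of_bool (i = j)"
  by (simp add: minus_mat_def)

lemma shifted_prod_carrier [simp]: "shifted_prod A n es \<in> carrier_mat n n"
  by (induction es) auto

lemma shifted_prod_dim [simp]: "dim_row (shifted_prod A n es) = n" "dim_col (shifted_prod A n es) = n"
  using shifted_prod_carrier by blast+

lemma shift_mult_commute: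
  fixes A B :: "'a :: comm_ring_1 mat"
  assumes A: "A \<in> carrier_mat n n" and B: "B \<in> carrier_mat n n" and "A * B = B * A"
  shows "(A - e \<cdot>\<^sub>m 1\<^sub>m n) * B = B * (A - e \<cdot>\<^sub>m 1\<^sub>m n)"
proof -
  have "(A - e \<cdot>\<^sub>m 1\<^sub>m n) * B = A * B - (e \<cdot>\<^sub>m 1\<^sub>m n) * B"
    by (rule minus_mult_distrib_mat[OF A _ B]) simp
  also have "(e \<cdot>\<^sub>m 1\<^sub>m n) * B = B * (e \<cdot>\<^sub>m 1\<^sub>m n)"
    using B by (simp add: mult_smult_assoc_mat[OF one_carrier_mat B] mult_smult_distrib[OF B one_carrier_mat])
  also have "A * B - B * (e \<cdot>\<^sub>m 1\<^sub>m n) = B * (A - e \<cdot>\<^sub>m 1\<^sub>m n)"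
    using assms(3) mult_minus_distrib_mat[OF B A smult_carrier_mat[OF one_carrier_mat]] by simp
  finally show ?thesis .
qed

lemma shifted_prod_commute:
  assumes A: "A \<in> carrier_mat n n"
  shows "(A - e \<cdot>\<^sub>m 1\<^sub>m n) * shifted_prod A n es = shifted_prod A n es * (A - e \<cdot>\<^sub>m 1\<^sub>m n)"
proof -
  have "A * shifted_prod A n es = shifted_prod A n es * A"
  proof (induction es)
    case (Cons f es)
    have "A * shifted_prod A n (f # es) = (A * (A - f \<cdot>\<^sub>m 1\<^sub>m n)) * shifted_prod A n es"
      by (simp add: assoc_mult_mat[OF A shift_carrier shifted_prod_carrier])
    also have "\<dots> = ((A - f \<cdot>\<^sub>m 1\<^sub>m n) * A) * shifted_prod A n es"
      using shift_mult_commute[OF A A refl] by simp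
    also have "\<dots> = (A - f \<cdot>\<^sub>m 1\<^sub>m n) * (shifted_prod A n es * A)"
      using Cons.IH by (simp add: assoc_mult_mat[OF shift_carrier A shifted_prod_carrier])
    also have "\<dots> = shifted_prod A n (f # es) * A"
      by (simp add: assoc_mult_mat[OF shift_carrier shifted_prod_carrier A])
    finally show ?case .
  qed (use A in simp)
  then show ?thesis
    using shift_mult_commute[OF A shifted_prod_carrier] by blast
qed

lemma shifted_prod_append: "shifted_prod A n (xs @ ys) = shifted_prod A n xs * shifted_prod A n ys"
  by (induction xs) (simp_all add: assoc_mult_mat[OF shift_carrier shifted_prod_carrier shifted_prod_carrier]
      left_mult_one_mat[OF shifted_prod_carrier])

lemma shifted_prod_perm:
  assumes A: "A \<in> carrier_mat n n"
  shows "mset xs = mset ys \<Longrightarrow> shifted_prod A n xs = shifted_prod A n ys"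
proof (induction xs arbitrary: ys)
  case (Cons x xs)
  then obtain ys1 ys2 where ys: "ys = ys1 @ x # ys2"
    by (metis list.set_intros(1) mset_eq_setD split_list)
  with Cons.prems have "mset xs = mset (ys1 @ ys2)"
    by simp
  have "shifted_prod A n ys = shifted_prod A n ys1 * ((A - x \<cdot>\<^sub>m 1\<^sub>m n) * shifted_prod A n ys2)"
    by (simp add: ys shifted_prod_append)
  also have "\<dots> = (A - x \<cdot>\<^sub>m 1\<^sub>m n) * (shifted_prod A n ys1 * shifted_prod A n ys2)"
    using shifted_prod_commute[OF A, of x ys1]
    by (simp add: assoc_mult_mat[OF shift_carrier shifted_prod_carrier shifted_prod_carrier, symmetric]
        assoc_mult_mat[OF shifted_prod_carrier shift_carrier shifted_prod_carrier, symmetric])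
  also have "\<dots> = shifted_prod A n (x # xs)"
    using Cons.IH[OF \<open>mset xs = mset (ys1 @ ys2)\<close>] by (simp add: shifted_prod_append)
  finally show ?case
    by (rule sym)
qed simp

lemma shifted_prod_similar:
  assumes "similar_mat_wit A B P Q" and "A \<in> carrier_mat n n"
  shows "shifted_prod A n es = P * shifted_prod B n es * Q"
proof -
  have B: "B \<in> carrier_mat n n" and P: "P \<in> carrier_mat n n" and Q: "Q \<in> carrier_mat n n"
    and PQ: "P * Q = 1\<^sub>m n" and QP: "Q * P = 1\<^sub>m n" and AB: "A = P * B * Q"
    using assms unfolding similar_mat_wit_def Let_def by auto
  have shift: "A - e \<cdot>\<^sub>m 1\<^sub>m n = P * (B - e \<cdot>\<^sub>m 1\<^sub>m n) * Q" for e
  proof -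
    have "P * (B - e \<cdot>\<^sub>m 1\<^sub>m n) = P * B - e \<cdot>\<^sub>m P"
      using mult_minus_distrib_mat[OF P B smult_carrier_mat[OF one_carrier_mat]] P
      by (simp add: mult_smult_distrib[OF P one_carrier_mat])
    moreover have "(P * B - e \<cdot>\<^sub>m P) * Q = P * B * Q - e \<cdot>\<^sub>m (P * Q)"
      using minus_mult_distrib_mat[OF mult_carrier_mat[OF P B] smult_carrier_mat[OF P] Q]
      by (simp add: mult_smult_assoc_mat[OF P Q])
    ultimately show ?thesis
      using AB PQ by simp
  qed
  have conj_mult: "(P * X * Q) * (P * Y * Q) = P * (X * Y) * Q"
    if X: "X \<in> carrier_mat n n" and Y: "Y \<in> carrier_mat n n" for X Y
  proof -
    have "(P * X * Q) * (P * Y * Q) = P * (X * ((Q * P) * (Y * Q)))"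
      using P Q X Y by (simp add: assoc_mult_mat[of _ n n _ n _ n])
    also have "\<dots> = P * (X * Y) * Q"
      using P Q X Y by (simp add: QP assoc_mult_mat[of _ n n _ n _ n])
    finally show ?thesis .
  qed
  show ?thesis
  proof (induction es)
    case Nil
    then show ?case
      using P PQ by simp
  next
    case (Cons e es)
    then show ?case
      by (simp add: shift conj_mult[OF shift_carrier shifted_prod_carrier])
  qed
qed

lemma shifted_prod_upper_triangular:
  assumes B: "B \<in> carrier_mat n n" and "upper_triangular B" and "diag_mat B = es"
  shows "shifted_prod B n es = 0\<^sub>m n n"
proof -
  have len: "length es = n" and es_nth: "j < n \<Longrightarrow> es ! j = B $$ (j, j)" for j
    using assms(3) B by (auto simp: diag_mat_def)
  have below: "l < i \<Longrightarrow> i < n \<Longrightarrow> B $$ (i, l) = 0" for i l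
    using assms(2) B unfolding upper_triangular_def by auto
  have "\<forall>i c. j \<le> i \<longrightarrow> i < n \<longrightarrow> c < n \<longrightarrow> shifted_prod B n (drop j es) $$ (i, c) = 0"
    if "j \<le> n" for j
    using that
  proof (induction j rule: inc_induct)
    case (step j)
    have drop_j: "drop j es = es ! j # drop (Suc j) es"
      using step.hyps len by (simp add: Cons_nth_drop_Suc)
    show ?case
    proof (intro allI impI)
      fix i c assume ic: "j \<le> i" "i < n" "c < n"
      have "(B - es ! j \<cdot>\<^sub>m 1\<^sub>m n) $$ (i, l) * shifted_prod B n (drop (Suc j) es) $$ (l, c) = 0"
        if "l < n" for l
        using that ic step.IH below[of l i] es_nth[of j] step.hyps
        by (cases "l < i"; cases "l = j") (auto simp: shift_index)
      moreover have "shifted_prod B n (drop j es) $$ (i, c) = (\<Sum>l<n. (B - es ! j \<cdot>\<^sub>m 1\<^sub>m n) $$ (i, l)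
          * shifted_prod B n (drop (Suc j) es) $$ (l, c))"
        unfolding drop_j shifted_prod.simps by (rule mult_mat_index[OF shift_carrier shifted_prod_carrier ic(2,3)])
      ultimately show "shifted_prod B n (drop j es) $$ (i, c) = 0"
        by simp
    qed
  qed simp
  from this[of 0] show ?thesis
    by (intro eq_matI) auto
qed

lemma shifted_prod_symmetric:
  assumes A: "A \<in> carrier_mat n n" and "transpose_mat A = A"
  shows "transpose_mat (shifted_prod A n es) = shifted_prod A n es"
proof (induction es)
  case (Cons e es)
  have "transpose_mat (A - e \<cdot>\<^sub>m 1\<^sub>m n) = A - e \<cdot>\<^sub>m 1\<^sub>m n"
    using assms by (intro eq_matI) (auto simp: shift_index, metis index_transpose_mat(1) carrier_matD)
  then have "transpose_mat (shifted_prod A n (e # es)) = shifted_prod A n es * (A - e \<cdot>\<^sub>m 1\<^sub>m n)"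
    using Cons.IH by (simp add: transpose_mult[OF shift_carrier shifted_prod_carrier])
  then show ?case
    by (simp add: shifted_prod_commute[OF A])
qed simp

lemma symmetric_square_zero:
  fixes X :: "real mat"
  assumes X: "X \<in> carrier_mat n n" and "transpose_mat X = X" and "X * X = 0\<^sub>m n n"
  shows "X = 0\<^sub>m n n"
proof (rule eq_matI)
  fix i j assume "i < dim_row (0\<^sub>m n n :: real mat)" "j < dim_col (0\<^sub>m n n :: real mat)"
  hence ij: "i < n" "j < n"
    by auto
  have "X $$ (l, i) = X $$ (i, l)" if "l < n" for l
    using assms(2) X ij that by (metis carrier_matD index_transpose_mat(1))
  hence "(\<Sum>l<n. (X $$ (i, l))\<^sup>2) = (X * X) $$ (i, i)"
    using ij by (simp add: mult_mat_index[OF X X] power2_eq_square)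
  also have "\<dots> = 0"
    using assms(3) ij by simp
  finally have "\<forall>l<n. (X $$ (i, l))\<^sup>2 = 0"
    by (subst (asm) sum_nonneg_eq_0_iff) auto
  then show "X $$ (i, j) = 0\<^sub>m n n $$ (i, j)"
    using ij by simp
qed (use X in auto)

text \<open>If \<open>T (A - e) = 0\<close> and the shift \<open>e\<close> already occurs in \<open>T = (A - e) U\<close>, then
  \<open>T\<^sup>2 = T (A - e) U = 0\<close>, which forces \<open>T = 0\<close> for symmetric \<open>T\<close>.\<close>

lemma shifted_prod_remdups:
  fixes A :: "real mat"
  assumes A: "A \<in> carrier_mat n n" and A_sym: "transpose_mat A = A" and "shifted_prod A n es = 0\<^sub>m n n"
  shows "shifted_prod A n (remdups es) = 0\<^sub>m n n"
proof -
  have "shifted_prod A n ds = 0\<^sub>m n n"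
    if "set rest \<subseteq> set ds" "shifted_prod A n (ds @ rest) = 0\<^sub>m n n" for ds rest
    using that
  proof (induction rest)
    case (Cons e rest)
    let ?T = "shifted_prod A n (ds @ rest)"
    have e: "e \<in> set ds"
      using Cons.prems by simp
    have "?T * (A - e \<cdot>\<^sub>m 1\<^sub>m n) = shifted_prod A n ((ds @ rest) @ [e])"
      by (simp only: shifted_prod_append) simp
    also have "\<dots> = shifted_prod A n (ds @ e # rest)"
      by (rule shifted_prod_perm[OF A]) simp
    finally have T_shift: "?T * (A - e \<cdot>\<^sub>m 1\<^sub>m n) = 0\<^sub>m n n"
      using Cons.prems by simp
    have "?T = (A - e \<cdot>\<^sub>m 1\<^sub>m n) * shifted_prod A n (remove1 e ds @ rest)"
      using shifted_prod_perm[OF A, of "ds @ rest" "e # remove1 e ds @ rest"] e by simp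
    hence "?T * ?T = (?T * (A - e \<cdot>\<^sub>m 1\<^sub>m n)) * shifted_prod A n (remove1 e ds @ rest)"
      by (metis assoc_mult_mat shift_carrier shifted_prod_carrier)
    hence "?T * ?T = 0\<^sub>m n n"
      by (simp add: T_shift left_mult_zero_mat[OF shifted_prod_carrier])
    hence "?T = 0\<^sub>m n n"
      by (rule symmetric_square_zero[OF shifted_prod_carrier shifted_prod_symmetric[OF A A_sym]])
    then show ?case
      using Cons.IH Cons.prems by simp
  qed simp
  moreover obtain rest where rest: "mset rest = mset es - mset (remdups es)"
    using ex_mset by blast
  moreover have "mset es = mset (remdups es @ rest)"
    using rest mset_remdups_subset_eq[of es] by (simp add: subset_mset.diff_add)
  moreover have "set rest \<subseteq> set (remdups es)"
    using rest by (metis in_diffD set_mset_mset set_remdups subsetI)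
  ultimately show ?thesis
    using assms(3) shifted_prod_perm[OF A] by metis
qed

text \<open>\<open>d\<close> is the graph distance from the root \<open>u\<close>, and every other vertex \<open>y\<close> has exactly one
  neighbour, \<open>par y\<close>, that is closer to \<open>u\<close>; so each vertex is joined to \<open>u\<close> by a unique
  shortest path.\<close>

definition geodesic_tree :: "nat \<Rightarrow> (nat \<Rightarrow> nat \<Rightarrow> bool) \<Rightarrow> nat \<Rightarrow> (nat \<Rightarrow> nat) \<Rightarrow> (nat \<Rightarrow> nat) \<Rightarrow> bool" where
  "geodesic_tree n E u d par \<longleftrightarrow> u < n \<and> d u = 0 \<and>
     (\<forall>x<n. \<forall>y<n. E x y \<longrightarrow> d y \<le> d x + 1) \<and>
     (\<forall>y<n. y \<noteq> u \<longrightarrow> par y < n \<and> E (par y) y \<and> d (par y) + 1 = d y \<and>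
        (\<forall>x<n. E x y \<longrightarrow> x \<noteq> par y \<longrightarrow> d y \<le> d x))"

lemma shifted_prod_geodesic_entry:
  fixes A :: "'a :: idom mat"
  assumes A: "A \<in> carrier_mat n n"
    and pattern: "\<And>x y. x < n \<Longrightarrow> y < n \<Longrightarrow> x \<noteq> y \<Longrightarrow> A $$ (x, y) \<noteq> 0 \<longleftrightarrow> E x y"
    and tree: "geodesic_tree n E u d par"
  shows "y < n \<Longrightarrow> (length es < d y \<longrightarrow> shifted_prod A n es $$ (u, y) = 0) \<and>
    (length es = d y \<longrightarrow> shifted_prod A n es $$ (u, y) \<noteq> 0)"
proof (induction es arbitrary: y)
  case Nil
  then show ?case
    using tree by (auto simp: geodesic_tree_def)
next
  case (Cons e es)
  let ?P = "shifted_prod A n es" and ?S = "A - e \<cdot>\<^sub>m 1\<^sub>m n"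
  have u: "u < n" and d_step: "\<And>x. x < n \<Longrightarrow> E x y \<Longrightarrow> d y \<le> d x + 1"
    using tree Cons.prems by (auto simp: geodesic_tree_def)
  have entry: "shifted_prod A n (e # es) $$ (u, y) = (\<Sum>x<n. ?P $$ (u, x) * ?S $$ (x, y))"
    using shifted_prod_commute[OF A, of e es]
    by (simp only: shifted_prod.simps) (rule mult_mat_index[OF shifted_prod_carrier shift_carrier u Cons.prems])
  have off_path: "?P $$ (u, x) * ?S $$ (x, y) = 0"
    if "x < n" and "length es < d x \<or> (x \<noteq> y \<and> \<not> E x y)" for x
    using that Cons.IH[of x] pattern[of x y] Cons.prems by (auto simp: shift_index)
  show ?case
  proof (intro conjI impI)
    assume "length (e # es) < d y"
    then show "shifted_prod A n (e # es) $$ (u, y) = 0"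
      unfolding entry using off_path d_step by (force intro!: sum.neutral)
  next
    assume len: "length (e # es) = d y"
    then have "y \<noteq> u"
      using tree by (auto simp: geodesic_tree_def)
    then have par: "par y < n" "E (par y) y" "d (par y) + 1 = d y" "par y \<noteq> y"
      and other: "\<And>x. x < n \<Longrightarrow> E x y \<Longrightarrow> x \<noteq> par y \<Longrightarrow> d y \<le> d x"
      using tree Cons.prems by (auto simp: geodesic_tree_def)
    have "(\<Sum>x<n. ?P $$ (u, x) * ?S $$ (x, y)) = ?P $$ (u, par y) * ?S $$ (par y, y)"
      using len par other off_path by (intro sum.mono_neutral_right[of _ "{par y}", simplified]) force+
    moreover have "?P $$ (u, par y) \<noteq> 0"
      using Cons.IH[OF par(1)] len par(3) by simp
    moreover have "?S $$ (par y, y) \<noteq> 0"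
      using pattern[OF par(1) Cons.prems par(4)] par Cons.prems by (simp add: shift_index)
    ultimately show "shifted_prod A n (e # es) $$ (u, y) \<noteq> 0"
      unfolding entry by simp
  qed
qed

lemma card_eigenvalues_ge_geodesic_dist:
  assumes A: "A \<in> sym_pattern n E" and tree: "geodesic_tree n E u d par" and "y < n"
    and "is_spectrum \<sigma> A"
  shows "d y + 1 \<le> card (set_mset \<sigma>)"
proof (rule ccontr)
  assume few: "\<not> d y + 1 \<le> card (set_mset \<sigma>)"
  have A_carrier: "A \<in> carrier_mat n n" and A_sym: "transpose_mat A = A"
    and pattern: "\<And>x y. x < n \<Longrightarrow> y < n \<Longrightarrow> x \<noteq> y \<Longrightarrow> A $$ (x, y) \<noteq> 0 \<longleftrightarrow> E x y"
    using A by (auto simp: sym_pattern_def)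
  obtain es where es: "mset es = \<sigma>"
    using ex_mset by blast
  obtain B P Q where "schur_decomposition A es = (B, P, Q)"
    by (cases "schur_decomposition A es") auto
  from schur_decomposition[OF A_carrier _ this] assms(4)
  have "similar_mat_wit A B P Q" and "upper_triangular B" and "diag_mat B = es"
    by (auto simp: es[symmetric] is_spectrum_mset)
  moreover from this have "B \<in> carrier_mat n n" and "P \<in> carrier_mat n n" and "Q \<in> carrier_mat n n"
    using A_carrier by (auto simp: similar_mat_wit_def Let_def)
  ultimately have "shifted_prod A n es = 0\<^sub>m n n"
    using A_carrier by (simp add: shifted_prod_similar shifted_prod_upper_triangular)
  hence "shifted_prod A n (remdups es) = 0\<^sub>m n n"
    by (rule shifted_prod_remdups[OF A_carrier A_sym])
  moreover have "length (remdups es) \<le> d y"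
    using few by (simp add: es[symmetric] length_remdups_card_conv)
  ultimately have "shifted_prod A n (remdups es @ replicate (d y - length (remdups es)) 0) $$ (u, y) = 0"
    and "length (remdups es @ replicate (d y - length (remdups es)) 0) = d y"
    using tree \<open>y < n\<close> by (simp_all add: shifted_prod_append left_mult_zero_mat[OF shifted_prod_carrier] geodesic_tree_def)
  then show False
    using shifted_prod_geodesic_entry[OF A_carrier pattern tree \<open>y < n\<close>] by blast
qed

lemma lollipop_geodesic_tree:
  assumes "k \<ge> 2"
  shows "geodesic_tree (k + p) (lollipop_edge k p) 0
    (\<lambda>i. if i = 0 then 0 else if i < k then 1 else i + 2 - k) (\<lambda>i. if i < k then 0 else i - 1)"
  using assms unfolding geodesic_tree_def lollipop_edge_def by auto

lemma obtain_distinct_submultiset: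
  assumes "card (set_mset \<sigma>) \<ge> m"
  obtains xs ys where "distinct xs" and "length xs = m" and "\<sigma> = mset ys + mset xs"
proof -
  obtain \<Lambda> where \<Lambda>: "\<Lambda> \<subseteq> set_mset \<sigma>" "card \<Lambda> = m"
    using obtain_subset_with_card_n[OF assms] by blast
  obtain xs where "set xs = \<Lambda>" and "distinct xs"
    using \<Lambda>(1) finite_distinct_list finite_subset by blast
  hence xs: "distinct xs" "length xs = m" "mset xs = mset_set \<Lambda>"
    using \<Lambda>(2) by (auto simp: distinct_card mset_set_set)
  have "mset_set \<Lambda> \<subseteq># mset_set (set_mset \<sigma>)"
    using \<Lambda>(1) by (rule subset_imp_msubset_mset_set) simp
  also have "\<dots> \<subseteq># \<sigma>"
    by (rule mset_set_set_mset_msubset)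
  finally have "mset xs \<subseteq># \<sigma>"
    using xs(3) by simp
  moreover obtain ys where "mset ys = \<sigma> - mset xs"
    using ex_mset by blast
  ultimately have "\<sigma> = mset ys + mset xs"
    by (simp add: subset_mset.diff_add)
  with xs(1,2) show ?thesis
    by (rule that)
qed

theorem corollary2p6:
  fixes k p :: nat and \<sigma> :: "real multiset"
  assumes "k \<ge> 2" and "p \<ge> 1" and "size \<sigma> = k + p"
  shows "(\<exists>A \<in> sym_pattern (k + p) (lollipop_edge k p). is_spectrum \<sigma> A)
         \<longleftrightarrow> card (set_mset \<sigma>) \<ge> p + 2"
proof
  assume "\<exists>A \<in> sym_pattern (k + p) (lollipop_edge k p). is_spectrum \<sigma> A"
  then obtain A where A: "A \<in> sym_pattern (k + p) (lollipop_edge k p)" and "is_spectrum \<sigma> A"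
    by blast
  have "\<not> k + p - 1 < k"
    using assms(2) by linarith
  then show "card (set_mset \<sigma>) \<ge> p + 2"
    using card_eigenvalues_ge_geodesic_dist[OF A lollipop_geodesic_tree[OF assms(1)] _ \<open>is_spectrum \<sigma> A\<close>,
        of "k + p - 1"] assms(1,2)
    by simp
next
  assume "card (set_mset \<sigma>) \<ge> p + 2"
  then obtain xs ds where "distinct xs" and "length xs = p + 2" and \<sigma>: "\<sigma> = mset ds + mset xs"
    by (rule obtain_distinct_submultiset)
  moreover have "length ds = k - 2"
    using assms(3) \<open>length xs = p + 2\<close> by (simp add: \<sigma>)
  ultimately show "\<exists>A \<in> sym_pattern (k + p) (lollipop_edge k p). is_spectrum \<sigma> A"
    using lollipop_realization[OF assms(1,2)] by simp
qed

end
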